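(* There exist absolute constants $c>0$ and $\rho>0$ such that for every even $k\ge2$ and every $p\in\Delta([k]\times[k])$ with marginals $p_1,p_2$, if $S_1,S_2$ are independent uniformly random subsets of $[k]$ of cardinality $k/2$, then $$\Pr\Big[\big|p(S_1\times S_2)-p_1(S_1)p_2(S_2)\big|\ge c\,\frac{d_{TV}(p,p_1\otimes p_2)}{k}\Big]\ge\rho .$$
   Context: $\Delta([k]\times[k])$ is the set of probability distributions on $[k]\times[k]$; $p_1(x)=\sum_y p(x,y)$, $p_2(y)=\sum_x p(x,y)$; $(p_1\otimes p_2)(x,y)=p_1(x)p_2(y)$; $d_{TV}(p,q)=\frac12\|p-q\|_1$; for a set $A$, $p(A)=\sum_{a\in A}p(a)$. *)

theory Defs
  imports Complex_Main
begin

definition is_dist :: "nat \<Rightarrow> (nat \<times> nat \<Rightarrow> real) \<Rightarrow> bool" where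
  "is_dist k p \<longleftrightarrow> (\<forall>z. p z \<ge> 0) \<and> (\<forall>z. z \<notin> {1..k} \<times> {1..k} \<longrightarrow> p z = 0)
     \<and> (\<Sum>z\<in>{1..k} \<times> {1..k}. p z) = 1"

definition marg1 :: "nat \<Rightarrow> (nat \<times> nat \<Rightarrow> real) \<Rightarrow> nat \<Rightarrow> real" where
  "marg1 k p x = (\<Sum>y\<in>{1..k}. p (x, y))"

definition marg2 :: "nat \<Rightarrow> (nat \<times> nat \<Rightarrow> real) \<Rightarrow> nat \<Rightarrow> real" where
  "marg2 k p y = (\<Sum>x\<in>{1..k}. p (x, y))"

definition prod_dist :: "(nat \<Rightarrow> real) \<Rightarrow> (nat \<Rightarrow> real) \<Rightarrow> nat \<times> nat \<Rightarrow> real" where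
  "prod_dist q r = (\<lambda>(x, y). q x * r y)"

definition dTV :: "nat \<Rightarrow> (nat \<times> nat \<Rightarrow> real) \<Rightarrow> (nat \<times> nat \<Rightarrow> real) \<Rightarrow> real" where
  "dTV k p q = (1/2) * (\<Sum>z\<in>{1..k} \<times> {1..k}. \<bar>p z - q z\<bar>)"

definition mass :: "('a \<Rightarrow> real) \<Rightarrow> 'a set \<Rightarrow> real" where
  "mass p A = (\<Sum>a\<in>A. p a)"

text \<open>The k/2-subsets of [k]; (S1,S2) uniform on half_subsets k x half_subsets k.\<close>
definition half_subsets :: "nat \<Rightarrow> nat set set" where
  "half_subsets k = {S. S \<subseteq> {1..k} \<and> card S = k div 2}"

end

(* With q(x,y) = p(x,y) - p1(x) p2(y), which has zero row and column sums, the sum of |q| is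
   2 dTV(p, p1 \<otimes> p2) and p(S1 \<times> S2) - p1(S1) p2(S2) is the sum of q over S1 \<times> S2.
   For a zero-sum vector w and a uniform half subset S, the second and fourth moments of the sum of
   w over S can be computed exactly by counting the half subsets containing given indices; they are
   of order |w|^2 and O(|w|^4), so by Paley-Zygmund this sum is at least |w|/3 with constant
   probability. Applied to every column of q, this shows that with constant probability in S1 the
   row vector r(y) = sum of q(x,y) over x in S1 has l1-norm at least c (sum of |q|) / sqrt k;
   applied to r, which has zero sum, it shows that with constant probability in S2 the sum of r
   over S2 is at least c |r|_2 >= c |r|_1 / sqrt k. *)

theory Submission
  imports Defs "HOL-Analysis.Convex" "HOL-Analysis.L2_Norm"
begin

definition subsets_of_size :: "'a set \<Rightarrow> nat \<Rightarrow> 'a set set" where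
  "subsets_of_size I m = {S. S \<subseteq> I \<and> card S = m}"

(* The guard matters: for j > m the binomial would be (N - j) choose 0 = 1. *)
definition n_supersets :: "nat \<Rightarrow> nat \<Rightarrow> nat \<Rightarrow> nat" where
  "n_supersets N m j = (if j \<le> m then (N - j) choose (m - j) else 0)"

lemma finite_subsets_of_size: "finite I \<Longrightarrow> finite (subsets_of_size I m)"
  unfolding subsets_of_size_def by (rule finite_subset[of _ "Pow I"]) auto

lemma card_subsets_of_size: "finite I \<Longrightarrow> card (subsets_of_size I m) = card I choose m"
  unfolding subsets_of_size_def by (rule n_subsets)

lemma subsets_of_size_subset: "S \<in> subsets_of_size I m \<Longrightarrow> S \<subseteq> I"
  unfolding subsets_of_size_def by simp

lemma card_supersets_of_size:
  assumes fin: "finite I" and A: "A \<subseteq> I"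
  shows "card {S \<in> subsets_of_size I m. A \<subseteq> S} = n_supersets (card I) m (card A)"
proof (cases "card A \<le> m")
  case False
  have "card A \<le> m" if "S \<in> subsets_of_size I m" "A \<subseteq> S" for S
    using that card_mono[of S A] fin finite_subset unfolding subsets_of_size_def by fastforce
  then have "{S \<in> subsets_of_size I m. A \<subseteq> S} = {}" using False by blast
  then show ?thesis unfolding n_supersets_def using False by (simp only: card.empty if_False)
next
  case True
  have finA: "finite A" using A fin finite_subset by blast
  have "bij_betw (\<lambda>S. S - A) {S \<in> subsets_of_size I m. A \<subseteq> S}
      (subsets_of_size (I - A) (m - card A))"
  proof (rule bij_betw_byWitness[where f'="\<lambda>T. T \<union> A"])
    show "(\<lambda>S. S - A) ` {S \<in> subsets_of_size I m. A \<subseteq> S} \<subseteq> subsets_of_size (I - A) (m - card A)"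
      using card_Diff_subset[OF finA] by (auto simp: subsets_of_size_def)
    have "card (T \<union> A) = card T + card A" if "T \<subseteq> I - A" for T
      using that fin finA finite_subset by (intro card_Un_disjoint) auto
    then show "(\<lambda>T. T \<union> A) ` subsets_of_size (I - A) (m - card A) \<subseteq> {S \<in> subsets_of_size I m. A \<subseteq> S}"
      using True A by (auto simp: subsets_of_size_def)
  qed (auto simp: subsets_of_size_def)
  then have "card {S \<in> subsets_of_size I m. A \<subseteq> S} = card (I - A) choose (m - card A)"
    using fin by (simp add: bij_betw_same_card card_subsets_of_size)
  then show ?thesis
    using True card_Diff_subset[OF finA A] unfolding n_supersets_def by simp
qed

lemma n_supersets_le_card_subsets_of_size:
  assumes fin: "finite I" and "m \<le> card I"
  shows "n_supersets (card I) m j \<le> card (subsets_of_size I m)"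
proof (cases "j \<le> m")
  case True
  then obtain A where A: "A \<subseteq> I" "card A = j"
    using assms obtain_subset_with_card_n by (metis order.trans)
  then have "n_supersets (card I) m j = card {S \<in> subsets_of_size I m. A \<subseteq> S}"
    using card_supersets_of_size[OF fin] by simp
  also have "\<dots> \<le> card (subsets_of_size I m)"
    by (rule card_mono[OF finite_subsets_of_size[OF fin]]) auto
  finally show ?thesis .
qed (simp add: n_supersets_def)

lemma sum_subsets_of_size_superset_indicator:
  assumes "finite I" and "A \<subseteq> I"
  shows "(\<Sum>S\<in>subsets_of_size I m. c * of_bool (A \<subseteq> S)) = c * real (n_supersets (card I) m (card A))"
  using finite_subsets_of_size[OF assms(1)] card_supersets_of_size[OF assms]
  by (simp add: sum_distrib_left[symmetric] of_bool_def sum.If_cases Int_def)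

lemma sum_subset_eq_sum_indicator:
  fixes w :: "'a \<Rightarrow> real"
  assumes "finite I" and "S \<subseteq> I"
  shows "sum w S = (\<Sum>x\<in>I. w x * of_bool (x \<in> S))"
proof -
  have "(\<Sum>x\<in>I. w x * of_bool (x \<in> S)) = sum w (I \<inter> S)"
    using assms(1) by (simp add: sum.inter_restrict of_bool_def if_distrib cong: if_cong)
  then show ?thesis using assms(2) by (simp add: Int_absorb1)
qed

section \<open>Moments of subset sums\<close>

lemma second_moment_expansion:
  fixes w :: "'a \<Rightarrow> real"
  assumes fin: "finite I"
  shows "(\<Sum>S\<in>subsets_of_size I m. (sum w S)^2)
    = (\<Sum>x\<in>I. \<Sum>y\<in>I. w x * w y * real (n_supersets (card I) m (card {x, y})))"
proof -
  have "(sum w S)^2 = (\<Sum>x\<in>I. \<Sum>y\<in>I. w x * w y * of_bool ({x, y} \<subseteq> S))"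
    if "S \<in> subsets_of_size I m" for S
    unfolding sum_subset_eq_sum_indicator[OF fin subsets_of_size_subset[OF that]]
      power2_eq_square sum_product
    by (intro sum.cong refl) (simp add: of_bool_def)
  then have "(\<Sum>S\<in>subsets_of_size I m. (sum w S)^2)
      = (\<Sum>x\<in>I. \<Sum>y\<in>I. \<Sum>S\<in>subsets_of_size I m. w x * w y * of_bool ({x, y} \<subseteq> S))"
    by (simp add: sum.swap[where A = "subsets_of_size I m"])
  also have "\<dots> = (\<Sum>x\<in>I. \<Sum>y\<in>I. w x * w y * real (n_supersets (card I) m (card {x, y})))"
    using fin by (intro sum.cong refl sum_subsets_of_size_superset_indicator) auto
  finally show ?thesis .
qed

lemma fourth_moment_expansion:
  fixes w :: "'a \<Rightarrow> real"
  assumes fin: "finite I"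
  shows "(\<Sum>S\<in>subsets_of_size I m. (sum w S)^4)
    = (\<Sum>x\<in>I. \<Sum>y\<in>I. \<Sum>z\<in>I. \<Sum>u\<in>I.
        w x * w y * w z * w u * real (n_supersets (card I) m (card {x, y, z, u})))"
proof -
  have "(sum w S)^4 = (\<Sum>x\<in>I. \<Sum>y\<in>I. \<Sum>z\<in>I. \<Sum>u\<in>I.
      w x * w y * w z * w u * of_bool ({x, y, z, u} \<subseteq> S))"
    if "S \<in> subsets_of_size I m" for S
    unfolding sum_subset_eq_sum_indicator[OF fin subsets_of_size_subset[OF that]] power4_eq_xxxx
    by (simp add: sum_distrib_left sum_distrib_right mult_ac) (intro sum.cong refl; simp add: of_bool_def)
  then have "(\<Sum>S\<in>subsets_of_size I m. (sum w S)^4)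
      = (\<Sum>x\<in>I. \<Sum>y\<in>I. \<Sum>z\<in>I. \<Sum>u\<in>I. \<Sum>S\<in>subsets_of_size I m.
          w x * w y * w z * w u * of_bool ({x, y, z, u} \<subseteq> S))"
    by (simp add: sum.swap[where A = "subsets_of_size I m"])
  also have "\<dots> = (\<Sum>x\<in>I. \<Sum>y\<in>I. \<Sum>z\<in>I. \<Sum>u\<in>I.
      w x * w y * w z * w u * real (n_supersets (card I) m (card {x, y, z, u})))"
    using fin by (intro sum.cong refl sum_subsets_of_size_superset_indicator) auto
  finally show ?thesis .
qed

lemma sum_centered_mult_card_insert:
  fixes w :: "'a \<Rightarrow> real"
  assumes fin: "finite I" and T: "T \<subseteq> I" and w0: "sum w I = 0"
  shows "(\<Sum>u\<in>I. w u * h (card (insert u T))) = (h (card T) - h (Suc (card T))) * sum w T"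
proof -
  have finT: "finite T" using fin T finite_subset by blast
  have compl: "sum w (I - T) = - sum w T" using sum.subset_diff[OF T fin, of w] w0 by simp
  have "(\<Sum>u\<in>I. w u * h (card (insert u T)))
      = (\<Sum>u\<in>T. w u * h (card (insert u T))) + (\<Sum>u\<in>I - T. w u * h (card (insert u T)))"
    by (simp add: sum.subset_diff[OF T fin])
  also have "\<dots> = (\<Sum>u\<in>T. w u * h (card T)) + (\<Sum>u\<in>I - T. w u * h (Suc (card T)))"
    using finT by (intro arg_cong2[where f = "(+)"] sum.cong) (auto simp: insert_absorb)
  also have "\<dots> = sum w T * h (card T) + sum w (I - T) * h (Suc (card T))"
    by (simp add: sum_distrib_right)
  finally show ?thesis using compl by (simp add: algebra_simps)
qed

lemma sum_centered_mult_card_insert_sum: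
  fixes w :: "'a \<Rightarrow> real"
  assumes fin: "finite I" and T: "T \<subseteq> I" and w0: "sum w I = 0"
  shows "(\<Sum>z\<in>I. w z * g (card (insert z T)) * sum w (insert z T))
    = g (card T) * (sum w T)^2
      + g (Suc (card T)) * ((\<Sum>v\<in>I. (w v)^2) - (\<Sum>v\<in>T. (w v)^2) - (sum w T)^2)"
proof -
  have finT: "finite T" using fin T finite_subset by blast
  have compl: "sum w (I - T) = - sum w T" using sum.subset_diff[OF T fin, of w] w0 by simp
  have compl2: "(\<Sum>z\<in>I - T. (w z)^2) = (\<Sum>v\<in>I. (w v)^2) - (\<Sum>v\<in>T. (w v)^2)"
    using sum.subset_diff[OF T fin, of "\<lambda>v. (w v)^2"] by simp
  have "(\<Sum>z\<in>I. w z * g (card (insert z T)) * sum w (insert z T))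
      = (\<Sum>z\<in>T. w z * g (card (insert z T)) * sum w (insert z T))
        + (\<Sum>z\<in>I - T. w z * g (card (insert z T)) * sum w (insert z T))"
    by (simp add: sum.subset_diff[OF T fin])
  also have "\<dots> = (\<Sum>z\<in>T. w z * (g (card T) * sum w T))
      + (\<Sum>z\<in>I - T. g (Suc (card T)) * ((w z)^2 + sum w T * w z))"
    using finT by (intro arg_cong2[where f = "(+)"] sum.cong)
      (auto simp: insert_absorb power2_eq_square algebra_simps)
  also have "\<dots> = g (card T) * (sum w T)^2
      + g (Suc (card T)) * ((\<Sum>z\<in>I - T. (w z)^2) + sum w T * sum w (I - T))"
    by (simp add: sum_distrib_left[symmetric] sum_distrib_right[symmetric] sum.distrib
        power2_eq_square mult_ac)
  finally show ?thesis unfolding compl compl2 by (simp add: power2_eq_square algebra_simps)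
qed

lemma quadruple_sum_card_reduce:
  fixes w :: "'a \<Rightarrow> real" and h :: "nat \<Rightarrow> real"
  assumes fin: "finite I" and w0: "sum w I = 0"
  defines "D \<equiv> \<lambda>j. h j - h (Suc j)"
  shows "(\<Sum>x\<in>I. \<Sum>y\<in>I. \<Sum>z\<in>I. \<Sum>u\<in>I. w x * w y * w z * w u * h (card {x, y, z, u}))
    = (\<Sum>x\<in>I. \<Sum>y\<in>I. w x * w y * (D (card {x, y}) * (sum w {x, y})^2
        + D (Suc (card {x, y})) * ((\<Sum>v\<in>I. (w v)^2) - (\<Sum>v\<in>{x, y}. (w v)^2) - (sum w {x, y})^2)))"
proof (intro sum.cong refl)
  fix x y assume xy: "x \<in> I" "y \<in> I"
  have "(\<Sum>u\<in>I. w u * h (card (insert u {z, x, y}))) = D (card {z, x, y}) * sum w {z, x, y}"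
    if "z \<in> I" for z
    using sum_centered_mult_card_insert[OF fin _ w0, of "{z, x, y}" h] xy that by (simp add: D_def)
  then have "(\<Sum>z\<in>I. \<Sum>u\<in>I. w x * w y * w z * w u * h (card {x, y, z, u}))
      = w x * w y * (\<Sum>z\<in>I. w z * D (card (insert z {x, y})) * sum w (insert z {x, y}))"
    by (simp add: sum_distrib_left[symmetric] insert_commute mult.assoc cong: sum.cong)
  then show "(\<Sum>z\<in>I. \<Sum>u\<in>I. w x * w y * w z * w u * h (card {x, y, z, u}))
      = w x * w y * (D (card {x, y}) * (sum w {x, y})^2
        + D (Suc (card {x, y})) * ((\<Sum>v\<in>I. (w v)^2) - (\<Sum>v\<in>{x, y}. (w v)^2) - (sum w {x, y})^2))"
    using sum_centered_mult_card_insert_sum[OF fin _ w0, of "{x, y}" D] xy by simp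
qed

lemma pair_sum_card_closed_form:
  fixes w :: "'a \<Rightarrow> real" and D :: "nat \<Rightarrow> real"
  assumes fin: "finite I" and w0: "sum w I = 0"
  defines "P2 \<equiv> \<Sum>v\<in>I. (w v)^2" and "P4 \<equiv> \<Sum>v\<in>I. (w v)^4"
  shows "(\<Sum>x\<in>I. \<Sum>y\<in>I. w x * w y * (D (card {x, y}) * (sum w {x, y})^2
        + D (Suc (card {x, y})) * (P2 - (\<Sum>v\<in>{x, y}. (w v)^2) - (sum w {x, y})^2)))
    = 3 * (D 2 - D 3) * P2^2 + (D 1 - 6 * D 2 + 6 * D 3) * P4"
proof -
  define F where "F x y = D (card {x, y}) * (sum w {x, y})^2
    + D (Suc (card {x, y})) * (P2 - (\<Sum>v\<in>{x, y}. (w v)^2) - (sum w {x, y})^2)" for x y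
  define P3 where "P3 = (\<Sum>v\<in>I. (w v)^3)"
  define c1 where "c1 = 3 * (D 2 - D 3) * P2"
  define c0 where "c0 = (D 2 - 2 * D 3) * P3"
  define c3 where "c3 = D 1 - 6 * D 2 + 6 * D 3"
  have inner: "(\<Sum>y\<in>I. w y * F x y) = c3 * (w x)^3 + c1 * w x + c0" if x: "x \<in> I" for x
  proof -
    (* Off the diagonal F x y is a quadratic polynomial in w y, so summing over y only
       involves power sums of w. *)
    define G where "G y = D 2 * (w x + w y)^2 + D 3 * (P2 - ((w x)^2 + (w y)^2) - (w x + w y)^2)" for y
    have "F x y = G y" if "y \<in> I - {x}" for y
      using that by (auto simp: F_def G_def numeral_2_eq_2 numeral_3_eq_3)
    then have "(\<Sum>y\<in>I - {x}. w y * F x y) = (\<Sum>y\<in>I - {x}. w y * G y)"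
      by simp
    then have "(\<Sum>y\<in>I. w y * F x y) = w x * F x x + ((\<Sum>y\<in>I. w y * G y) - w x * G x)"
      using sum.remove[OF fin x, of "\<lambda>y. w y * F x y"] sum.remove[OF fin x, of "\<lambda>y. w y * G y"]
      by simp
    also have "(\<Sum>y\<in>I. w y * G y) = (\<Sum>y\<in>I. (D 2 * (w x)^2 + D 3 * P2 - 2 * D 3 * (w x)^2) * w y
        + (2 * (D 2 - D 3) * w x) * (w y)^2 + (D 2 - 2 * D 3) * (w y)^3)"
      by (intro sum.cong refl) (simp add: G_def power2_eq_square power3_eq_cube algebra_simps)
    also have "\<dots> = 2 * (D 2 - D 3) * w x * P2 + c0"
      using w0 by (simp add: sum.distrib sum_distrib_left[symmetric] P2_def P3_def c0_def)
    finally show ?thesis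
      unfolding F_def G_def c1_def c3_def
      by (simp add: numeral_2_eq_2 power2_eq_square power3_eq_cube algebra_simps)
  qed
  have "(\<Sum>x\<in>I. \<Sum>y\<in>I. w x * w y * F x y) = (\<Sum>x\<in>I. c3 * (w x)^4 + c1 * (w x)^2 + c0 * w x)"
    using inner by (intro sum.cong refl)
      (simp add: sum_distrib_left[symmetric] mult.assoc power2_eq_square power3_eq_cube
        power4_eq_xxxx algebra_simps)
  also have "\<dots> = c3 * P4 + c1 * P2"
    using w0 by (simp add: sum.distrib sum_distrib_left[symmetric] P2_def P4_def)
  finally show ?thesis unfolding F_def c1_def c3_def by (simp add: power2_eq_square)
qed

lemma second_moment_subsets_of_size:
  fixes w :: "'a \<Rightarrow> real"
  assumes fin: "finite I" and w0: "sum w I = 0"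
  shows "(\<Sum>S\<in>subsets_of_size I m. (sum w S)^2)
    = (real (n_supersets (card I) m 1) - real (n_supersets (card I) m 2)) * (\<Sum>v\<in>I. (w v)^2)"
proof -
  define h where "h j = real (n_supersets (card I) m j)" for j
  have "w x * (\<Sum>y\<in>I. w y * h (card (insert y {x}))) = (h 1 - h 2) * (w x)^2" if "x \<in> I" for x
    using sum_centered_mult_card_insert[OF fin _ w0, of "{x}" h] that
    by (simp add: power2_eq_square numeral_2_eq_2)
  then have "(\<Sum>x\<in>I. \<Sum>y\<in>I. w x * w y * h (card {x, y})) = (\<Sum>x\<in>I. (h 1 - h 2) * (w x)^2)"
    by (simp add: sum_distrib_left[symmetric] mult.assoc insert_commute cong: sum.cong)
  then show ?thesis
    unfolding second_moment_expansion[OF fin] h_def[symmetric] by (simp add: sum_distrib_left)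
qed

lemma fourth_moment_subsets_of_size_le:
  fixes w :: "'a \<Rightarrow> real"
  assumes fin: "finite I" and m: "m \<le> card I" and w0: "sum w I = 0"
  shows "(\<Sum>S\<in>subsets_of_size I m. (sum w S)^4)
    \<le> 19 * real (card (subsets_of_size I m)) * (\<Sum>v\<in>I. (w v)^2)^2"
proof -
  define n where "n = real (card (subsets_of_size I m))"
  define h where "h j = real (n_supersets (card I) m j)" for j
  define D where "D j = h j - h (Suc j)" for j
  define P4 where "P4 = (\<Sum>v\<in>I. (w v)^4)"
  have "\<bar>D j\<bar> \<le> n" for j
    using n_supersets_le_card_subsets_of_size[OF fin m] unfolding D_def h_def n_def
    by (simp add: abs_le_iff) (smt (verit) of_nat_0_le_iff of_nat_le_iff)
  then have D_bounds: "3 * (D 2 - D 3) \<le> 6 * n" "D 1 - 6 * D 2 + 6 * D 3 \<le> 13 * n"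
    using abs_le_D1 abs_le_D2 by (smt (verit))+
  have P4_le: "P4 \<le> (\<Sum>v\<in>I. (w v)^2)^2"
  proof -
    have "(w v)^4 \<le> (w v)^2 * (\<Sum>v\<in>I. (w v)^2)" if "v \<in> I" for v
    proof -
      have "(w v)^2 \<le> (\<Sum>v\<in>I. (w v)^2)" by (rule member_le_sum[OF that _ fin]) simp
      then have "(w v)^2 * (w v)^2 \<le> (w v)^2 * (\<Sum>v\<in>I. (w v)^2)" by (rule mult_left_mono) simp
      then show ?thesis by (simp add: power4_eq_xxxx power2_eq_square mult.assoc)
    qed
    then show ?thesis
      unfolding P4_def power2_eq_square[of "sum _ _"] sum_distrib_right by (rule sum_mono)
  qed
  have "(\<Sum>S\<in>subsets_of_size I m. (sum w S)^4)
      = (\<Sum>x\<in>I. \<Sum>y\<in>I. \<Sum>z\<in>I. \<Sum>u\<in>I. w x * w y * w z * w u * h (card {x, y, z, u}))"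
    unfolding fourth_moment_expansion[OF fin] h_def ..
  also note quadruple_sum_card_reduce[OF fin w0, of h, folded D_def]
  also note pair_sum_card_closed_form[OF fin w0, of "\<lambda>j. h j - h (Suc j)", folded D_def P4_def]
  also have "3 * (D 2 - D 3) * (\<Sum>v\<in>I. (w v)^2)^2 + (D 1 - 6 * D 2 + 6 * D 3) * P4
      \<le> 6 * n * (\<Sum>v\<in>I. (w v)^2)^2 + 13 * n * P4"
    using D_bounds by (intro add_mono mult_right_mono) (auto simp: P4_def sum_nonneg)
  also have "\<dots> \<le> 19 * n * (\<Sum>v\<in>I. (w v)^2)^2"
    using P4_le by (simp add: n_def mult_left_mono)
  finally show ?thesis unfolding n_def .
qed

section \<open>Anticoncentration of sums over half subsets\<close>

lemma central_binomial_le_n_supersets_diff: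
  assumes "m \<ge> 1"
  shows "real ((2 * m) choose m) \<le> 4 * (real (n_supersets (2 * m) m 1) - real (n_supersets (2 * m) m 2))"
proof -
  obtain j where j: "m = Suc j" using assms by (cases m) auto
  define n1 where "n1 = Suc (2 * j) choose j"
  have n1: "n_supersets (2 * m) m 1 = n1" by (simp add: n_supersets_def n1_def j)
  have "Suc (Suc (2 * j)) * n1 = (Suc (Suc (2 * j)) choose Suc j) * Suc j"
    unfolding n1_def by (rule Suc_times_binomial_eq)
  moreover have "Suc (Suc (2 * j)) = 2 * m" "Suc j = m" by (simp_all add: j)
  ultimately have "2 * n1 * m = ((2 * m) choose m) * m" by (simp only: mult_ac)
  then have central: "(2 * m) choose m = 2 * n1" using assms by simp
  have "2 * n_supersets (2 * m) m 2 \<le> n1"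
  proof (cases j)
    case (Suc i)
    have "Suc (Suc (Suc (2 * i))) * (Suc (Suc (2 * i)) choose i)
        = (Suc (Suc (Suc (2 * i))) choose Suc i) * Suc i"
      by (rule Suc_times_binomial_eq)
    then have "(2 * i + 3) * n_supersets (2 * m) m 2 = n1 * (i + 1)"
      by (simp add: n_supersets_def n1_def j Suc numeral_2_eq_2 numeral_3_eq_3)
    then have "(2 * i + 3) * (2 * n_supersets (2 * m) m 2) \<le> (2 * i + 3) * n1"
      by (simp add: algebra_simps)
    then show ?thesis by simp
  qed (simp add: n_supersets_def j)
  then have "2 * real (n_supersets (2 * m) m 2) \<le> real n1" by linarith
  then show ?thesis unfolding central n1 by simp
qed

lemma paley_zygmund_card:
  fixes Z :: "'b \<Rightarrow> real" and t C :: real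
  assumes fin: "finite H" and nonneg: "\<And>S. S \<in> H \<Longrightarrow> Z S \<ge> 0" and t: "t \<ge> 0" and C: "C \<ge> 1"
    and first: "2 * t * card H \<le> (\<Sum>S\<in>H. Z S)"
    and second: "(\<Sum>S\<in>H. (Z S)^2) \<le> C * card H * t^2"
  shows "card H \<le> C * card {S \<in> H. t \<le> Z S}"
proof (cases "t = 0 \<or> H = {}")
  case True
  then have "{S \<in> H. t \<le> Z S} = H" using nonneg by auto
  then show ?thesis using C by (simp add: mult_le_cancel_right1)
next
  case False
  define G where "G = {S \<in> H. t \<le> Z S}"
  have GH: "G \<subseteq> H" unfolding G_def by auto
  have pos: "t^2 * card H > 0" using False t fin by (simp add: card_gt_0_iff)
  have "(\<Sum>S\<in>H - G. Z S) \<le> t * card H"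
    using card_mono[OF fin, of "H - G"] t
    by (intro order.trans[OF sum_bounded_above[of "H - G" Z t]])
      (auto simp: G_def mult.commute mult_left_mono)
  then have "t * card H \<le> (\<Sum>S\<in>G. Z S)"
    using first sum.subset_diff[OF GH fin, of Z] by linarith
  then have "(t * card H)^2 \<le> (\<Sum>S\<in>G. Z S)^2"
    using t by (intro power_mono) auto
  also have "\<dots> \<le> (\<Sum>S\<in>G. (Z S)^2) * card G" by (rule sum_squared_le_sum_of_squares)
  also have "\<dots> \<le> C * card H * t^2 * card G"
    using second sum_mono2[OF fin GH, of "\<lambda>S. (Z S)^2"] by (intro mult_right_mono) auto
  finally have "(t^2 * card H) * card H \<le> (t^2 * card H) * (C * card G)"
    by (simp add: power2_eq_square mult_ac)
  then show ?thesis using pos unfolding G_def by (simp add: mult_le_cancel_left_pos)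
qed

lemma sum_sq_subsets_of_size_le:
  fixes w :: "'a \<Rightarrow> real"
  assumes fin: "finite I" and m: "m \<le> card I" and w0: "sum w I = 0"
  shows "(\<Sum>S\<in>subsets_of_size I m. (sum w S)^2) \<le> card (subsets_of_size I m) * (\<Sum>v\<in>I. (w v)^2)"
proof -
  have "real (n_supersets (card I) m 1) - real (n_supersets (card I) m 2) \<le> card (subsets_of_size I m)"
    using n_supersets_le_card_subsets_of_size[OF fin m, of 1] by linarith
  then show ?thesis
    unfolding second_moment_subsets_of_size[OF fin w0] by (rule mult_right_mono) (simp add: sum_nonneg)
qed

lemma card_half_subsets_sum_sq_ge:
  fixes w :: "'a \<Rightarrow> real"
  assumes fin: "finite I" and cI: "card I = 2 * m" and m: "m \<ge> 1" and w0: "sum w I = 0"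
  shows "real (card (subsets_of_size I m))
    \<le> 1216 * real (card {S \<in> subsets_of_size I m. (\<Sum>v\<in>I. (w v)^2) / 8 \<le> (sum w S)^2})"
proof (rule paley_zygmund_card[OF finite_subsets_of_size[OF fin]])
  define n where "n = real (card (subsets_of_size I m))"
  define P2 where "P2 = (\<Sum>v\<in>I. (w v)^2)"
  have P2: "P2 \<ge> 0" unfolding P2_def by (simp add: sum_nonneg)
  have "n \<le> 4 * (real (n_supersets (card I) m 1) - real (n_supersets (card I) m 2))"
    using central_binomial_le_n_supersets_diff[OF m] card_subsets_of_size[OF fin] cI by (simp add: n_def)
  then have "n * P2 \<le> 4 * (\<Sum>S\<in>subsets_of_size I m. (sum w S)^2)"
    unfolding second_moment_subsets_of_size[OF fin w0] P2_def[symmetric] mult.assoc[symmetric]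
    using P2 by (rule mult_right_mono)
  then show "2 * (P2 / 8) * card (subsets_of_size I m) \<le> (\<Sum>S\<in>subsets_of_size I m. (sum w S)^2)"
    by (simp add: n_def mult_ac)
  show "(\<Sum>S\<in>subsets_of_size I m. ((sum w S)^2)^2) \<le> 1216 * real (card (subsets_of_size I m)) * (P2 / 8)^2"
    using fourth_moment_subsets_of_size_le[OF fin _ w0, of m] cI
    by (simp add: P2_def power_divide flip: power_mult)
qed (simp_all add: sum_nonneg)

lemma sum_abs_half_subsets_ge:
  fixes w :: "'a \<Rightarrow> real"
  assumes fin: "finite I" and cI: "card I = 2 * m" and m: "m \<ge> 1" and w0: "sum w I = 0"
  shows "card (subsets_of_size I m) * sqrt (\<Sum>v\<in>I. (w v)^2) / 3648
    \<le> (\<Sum>S\<in>subsets_of_size I m. \<bar>sum w S\<bar>)"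
proof -
  define P2 where "P2 = (\<Sum>v\<in>I. (w v)^2)"
  define G where "G = {S \<in> subsets_of_size I m. P2 / 8 \<le> (sum w S)^2}"
  have P2: "P2 \<ge> 0" unfolding P2_def by (simp add: sum_nonneg)
  have large: "sqrt P2 / 3 \<le> \<bar>sum w S\<bar>" if "S \<in> G" for S
  proof (rule power2_le_imp_le)
    show "(sqrt P2 / 3)^2 \<le> \<bar>sum w S\<bar>^2"
      using that P2 by (simp add: G_def power_divide)
  qed simp
  have "card (subsets_of_size I m) * sqrt P2 / 3648 \<le> card G * (sqrt P2 / 3)"
    using mult_right_mono[OF card_half_subsets_sum_sq_ge[OF assms] real_sqrt_ge_zero[OF P2]]
    by (simp add: G_def P2_def)
  also have "\<dots> \<le> (\<Sum>S\<in>G. \<bar>sum w S\<bar>)"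
    using sum_mono[OF large] by simp
  also have "\<dots> \<le> (\<Sum>S\<in>subsets_of_size I m. \<bar>sum w S\<bar>)"
    by (rule sum_mono2[OF finite_subsets_of_size[OF fin]]) (auto simp: G_def)
  finally show ?thesis unfolding P2_def .
qed

section \<open>Bilinear sums over pairs of half subsets\<close>

lemma L2_set_sum_le: "L2_set (\<lambda>i. \<Sum>j\<in>J. f j i) A \<le> (\<Sum>j\<in>J. L2_set (f j) A)"
proof (induction J rule: infinite_finite_induct)
  case (insert j J)
  have "L2_set (\<lambda>i. f j i + (\<Sum>j\<in>J. f j i)) A \<le> L2_set (f j) A + L2_set (\<lambda>i. \<Sum>j\<in>J. f j i) A"
    by (rule L2_set_triangle_ineq)
  with insert show ?case by simp
qed (simp_all add: L2_set_def)

lemma sum_abs_le_sqrt_card_mult_L2_set: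
  "(\<Sum>i\<in>A. \<bar>f i\<bar>) \<le> sqrt (card A) * L2_set f A"
  using L2_set_mult_ineq[where f = "\<lambda>_. 1" and g = f and A = A] by (simp add: L2_set_constant)

lemma card_half_subsets_large_sum_abs:
  fixes q :: "'a \<Rightarrow> 'a \<Rightarrow> real"
  assumes fin: "finite I" and cI: "card I = 2 * m" and m: "m \<ge> 1"
    and col: "\<And>y. y \<in> I \<Longrightarrow> (\<Sum>x\<in>I. q x y) = 0"
  shows "real (card (subsets_of_size I m)) \<le> 7296^2 * real (card {S \<in> subsets_of_size I m.
    (\<Sum>y\<in>I. L2_set (\<lambda>x. q x y) I) / 7296 \<le> (\<Sum>y\<in>I. \<bar>\<Sum>x\<in>S. q x y\<bar>)})"
proof (rule paley_zygmund_card[OF finite_subsets_of_size[OF fin]])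
  define H where "H = subsets_of_size I m"
  define A where "A = (\<Sum>y\<in>I. L2_set (\<lambda>x. q x y) I)"
  have "real (card H) * A / 3648 \<le> (\<Sum>y\<in>I. \<Sum>S\<in>H. \<bar>\<Sum>x\<in>S. q x y\<bar>)"
    using sum_mono[OF sum_abs_half_subsets_ge[OF fin cI m col]]
    by (simp add: A_def H_def L2_set_def sum_distrib_left sum_divide_distrib)
  then show "2 * (A / 7296) * card H \<le> (\<Sum>S\<in>H. \<Sum>y\<in>I. \<bar>\<Sum>x\<in>S. q x y\<bar>)"
    by (subst sum.swap) (simp add: mult_ac)
  have "L2_set (\<lambda>S. \<Sum>x\<in>S. q x y) H \<le> sqrt (card H) * L2_set (\<lambda>x. q x y) I" if "y \<in> I" for y
    using sum_sq_subsets_of_size_le[OF fin _ col[OF that], of m] cI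
    by (simp add: L2_set_def H_def real_sqrt_mult[symmetric])
  then have "L2_set (\<lambda>S. \<Sum>y\<in>I. \<bar>\<Sum>x\<in>S. q x y\<bar>) H \<le> sqrt (card H) * A"
    using L2_set_sum_le[of "\<lambda>y S. \<bar>\<Sum>x\<in>S. q x y\<bar>" I H]
    by (simp add: A_def L2_set_def sum_distrib_left order_trans[OF _ sum_mono])
  then have "(L2_set (\<lambda>S. \<Sum>y\<in>I. \<bar>\<Sum>x\<in>S. q x y\<bar>) H)^2 \<le> (sqrt (card H) * A)^2"
    by (intro power_mono) simp_all
  then show "(\<Sum>S\<in>H. (\<Sum>y\<in>I. \<bar>\<Sum>x\<in>S. q x y\<bar>)^2) \<le> 7296^2 * real (card H) * (A / 7296)^2"
    by (simp add: L2_set_def sum_nonneg power_mult_distrib power_divide)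
qed (simp_all add: sum_nonneg)

lemma sum_abs_le_bilinear_sum:
  fixes q :: "'a \<Rightarrow> 'a \<Rightarrow> real"
  assumes rows: "(\<Sum>y\<in>I. L2_set (\<lambda>x. q x y) I) / 7296 \<le> (\<Sum>y\<in>I. \<bar>\<Sum>x\<in>S1. q x y\<bar>)"
    and cols: "(\<Sum>y\<in>I. (\<Sum>x\<in>S1. q x y)^2) / 8 \<le> (\<Sum>y\<in>S2. \<Sum>x\<in>S1. q x y)^2"
  shows "(\<Sum>x\<in>I. \<Sum>y\<in>I. \<bar>q x y\<bar>) / (21888 * card I) \<le> \<bar>\<Sum>x\<in>S1. \<Sum>y\<in>S2. q x y\<bar>"
proof -
  define K where "K = real (card I)"
  define r where "r y = (\<Sum>x\<in>S1. q x y)" for y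
  have column: "(\<Sum>x\<in>I. \<bar>q x y\<bar>) \<le> sqrt K * L2_set (\<lambda>x. q x y) I" for y
    unfolding K_def by (rule sum_abs_le_sqrt_card_mult_L2_set)
  have "(\<Sum>x\<in>I. \<Sum>y\<in>I. \<bar>q x y\<bar>) = (\<Sum>y\<in>I. \<Sum>x\<in>I. \<bar>q x y\<bar>)" by (rule sum.swap)
  also have "\<dots> \<le> sqrt K * (\<Sum>y\<in>I. L2_set (\<lambda>x. q x y) I)"
    unfolding sum_distrib_left using column by (rule sum_mono)
  also have "\<dots> \<le> sqrt K * (7296 * (\<Sum>y\<in>I. \<bar>r y\<bar>))"
    using rows by (intro mult_left_mono) (simp_all add: r_def K_def)
  also have "\<dots> \<le> sqrt K * (7296 * (sqrt K * L2_set r I))"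
    using sum_abs_le_sqrt_card_mult_L2_set[of r I]
    by (intro mult_left_mono) (simp_all add: K_def)
  also have "\<dots> \<le> sqrt K * (7296 * (sqrt K * (3 * \<bar>sum r S2\<bar>)))"
  proof -
    have "L2_set r I \<le> sqrt 8 * \<bar>sum r S2\<bar>"
      using cols real_sqrt_le_mono[of "(\<Sum>y\<in>I. (r y)^2)" "8 * (sum r S2)^2"]
      by (simp add: r_def L2_set_def real_sqrt_mult)
    also have "\<dots> \<le> 3 * \<bar>sum r S2\<bar>"
      by (rule mult_right_mono) (simp_all add: real_le_lsqrt)
    finally show ?thesis by (intro mult_left_mono) (simp_all add: K_def)
  qed
  also have "\<dots> = 21888 * (sqrt K * sqrt K) * \<bar>sum r S2\<bar>" by algebra
  also have "\<dots> = 21888 * K * \<bar>\<Sum>x\<in>S1. \<Sum>y\<in>S2. q x y\<bar>"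
    unfolding r_def by (subst sum.swap) (simp add: K_def)
  finally show ?thesis
    by (cases "K = 0") (simp_all add: K_def divide_le_eq mult_ac)
qed

lemma card_Sigma_ge:
  assumes "finite A" and "\<And>a. a \<in> A \<Longrightarrow> finite (B a) \<and> c \<le> real (card (B a))"
  shows "real (card A) * c \<le> real (card (Sigma A B))"
proof -
  have "real (card A) * c \<le> (\<Sum>a\<in>A. real (card (B a)))"
    using sum_mono[of A "\<lambda>_. c"] assms(2) by (simp add: mult.commute)
  also have "\<dots> = real (card (Sigma A B))"
    using assms by (simp add: card_SigmaI)
  finally show ?thesis .
qed

lemma card_half_subset_pairs_large_bilinear_sum:
  fixes q :: "'a \<Rightarrow> 'a \<Rightarrow> real"
  assumes fin: "finite I" and cI: "card I = 2 * m" and m: "m \<ge> 1"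
    and row: "\<And>x. x \<in> I \<Longrightarrow> (\<Sum>y\<in>I. q x y) = 0"
    and col: "\<And>y. y \<in> I \<Longrightarrow> (\<Sum>x\<in>I. q x y) = 0"
  shows "1 / (7296^2 * 1216) \<le> real (card {(S1, S2) \<in> subsets_of_size I m \<times> subsets_of_size I m.
      (\<Sum>x\<in>I. \<Sum>y\<in>I. \<bar>q x y\<bar>) / (21888 * card I) \<le> \<bar>\<Sum>x\<in>S1. \<Sum>y\<in>S2. q x y\<bar>})
    / real (card (subsets_of_size I m \<times> subsets_of_size I m))"
proof -
  define H where "H = subsets_of_size I m"
  define n where "n = real (card H)"
  define G1 where "G1 = {S1 \<in> H.
    (\<Sum>y\<in>I. L2_set (\<lambda>x. q x y) I) / 7296 \<le> (\<Sum>y\<in>I. \<bar>\<Sum>x\<in>S1. q x y\<bar>)}"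
  define G2 where "G2 S1 = {S2 \<in> H.
    (\<Sum>y\<in>I. (\<Sum>x\<in>S1. q x y)^2) / 8 \<le> (\<Sum>y\<in>S2. \<Sum>x\<in>S1. q x y)^2}" for S1
  define Good where "Good = {(S1, S2) \<in> H \<times> H.
    (\<Sum>x\<in>I. \<Sum>y\<in>I. \<bar>q x y\<bar>) / (21888 * card I) \<le> \<bar>\<Sum>x\<in>S1. \<Sum>y\<in>S2. q x y\<bar>}"
  have finH: "finite H" unfolding H_def by (rule finite_subsets_of_size[OF fin])
  have n: "n > 0" using cI by (simp add: n_def H_def card_subsets_of_size[OF fin])
  have G1: "n \<le> 7296^2 * real (card G1)"
    using card_half_subsets_large_sum_abs[OF fin cI m col] by (simp add: n_def H_def G1_def)
  have G2: "n / 1216 \<le> real (card (G2 S1))" if "S1 \<in> G1" for S1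
  proof -
    have "(\<Sum>y\<in>I. \<Sum>x\<in>S1. q x y) = (\<Sum>x\<in>S1. \<Sum>y\<in>I. q x y)" by (rule sum.swap)
    also have "\<dots> = 0"
      using that row subsets_of_size_subset[of S1 I m] by (auto simp: G1_def H_def intro: sum.neutral)
    finally have "(\<Sum>y\<in>I. \<Sum>x\<in>S1. q x y) = 0" .
    from card_half_subsets_sum_sq_ge[OF fin cI m this] show ?thesis
      by (simp add: n_def H_def G2_def)
  qed
  have "Sigma G1 G2 \<subseteq> Good"
    using sum_abs_le_bilinear_sum by (auto simp: G1_def G2_def Good_def)
  then have "card (Sigma G1 G2) \<le> card Good"
    using finH by (intro card_mono) (auto simp: Good_def intro: finite_subset[of _ "H \<times> H"])
  moreover have "card G1 * (n / 1216) \<le> card (Sigma G1 G2)"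
    using finH G2 by (intro card_Sigma_ge) (auto simp: G1_def G2_def)
  ultimately have "card G1 * n \<le> 1216 * card Good" by simp
  moreover have "n * n \<le> 7296^2 * (card G1 * n)"
    using mult_right_mono[OF G1, of n] n by (simp add: mult_ac)
  ultimately have "n * n / (7296^2 * 1216) \<le> card Good" by (simp add: field_simps)
  then show ?thesis
    using n by (simp add: Good_def H_def n_def card_cartesian_product field_simps)
qed

definition product_deviation :: "nat \<Rightarrow> (nat \<times> nat \<Rightarrow> real) \<Rightarrow> nat \<Rightarrow> nat \<Rightarrow> real" where
  "product_deviation k p x y = p (x, y) - marg1 k p x * marg2 k p y"

lemma sum_marg1: "is_dist k p \<Longrightarrow> (\<Sum>x\<in>{1..k}. marg1 k p x) = 1"
  unfolding is_dist_def marg1_def by (simp add: sum.cartesian_product)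

lemma sum_marg2: "is_dist k p \<Longrightarrow> (\<Sum>y\<in>{1..k}. marg2 k p y) = 1"
  unfolding is_dist_def marg2_def by (subst sum.swap) (simp add: sum.cartesian_product)

lemma sum_product_deviation_row:
  assumes "is_dist k p"
  shows "(\<Sum>y\<in>{1..k}. product_deviation k p x y) = 0"
proof -
  have "(\<Sum>y\<in>{1..k}. product_deviation k p x y)
      = marg1 k p x - marg1 k p x * (\<Sum>y\<in>{1..k}. marg2 k p y)"
    by (simp add: product_deviation_def sum_subtractf sum_distrib_left marg1_def)
  then show ?thesis using sum_marg2[OF assms] by simp
qed

lemma sum_product_deviation_col:
  assumes "is_dist k p"
  shows "(\<Sum>x\<in>{1..k}. product_deviation k p x y) = 0"
proof -
  have "(\<Sum>x\<in>{1..k}. product_deviation k p x y)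
      = marg2 k p y - (\<Sum>x\<in>{1..k}. marg1 k p x) * marg2 k p y"
    by (simp add: product_deviation_def sum_subtractf sum_distrib_right marg2_def)
  then show ?thesis using sum_marg1[OF assms] by simp
qed

lemma dTV_prod_marginals:
  "dTV k p (prod_dist (marg1 k p) (marg2 k p))
    = (\<Sum>x\<in>{1..k}. \<Sum>y\<in>{1..k}. \<bar>product_deviation k p x y\<bar>) / 2"
  by (simp add: dTV_def prod_dist_def product_deviation_def sum.cartesian_product case_prod_beta)

lemma mass_rectangle_minus_product:
  "mass p (S1 \<times> S2) - mass (marg1 k p) S1 * mass (marg2 k p) S2
    = (\<Sum>x\<in>S1. \<Sum>y\<in>S2. product_deviation k p x y)"
  by (simp add: mass_def product_deviation_def sum_product sum_subtractf sum.cartesian_product)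

theorem corollary6p7:
  shows "\<exists>c::real. \<exists>\<rho>::real. c > 0 \<and> \<rho> > 0 \<and>
    (\<forall>k::nat. \<forall>p. even k \<and> k \<ge> 2 \<and> is_dist k p \<longrightarrow>
      real (card {(S1, S2) \<in> half_subsets k \<times> half_subsets k.
          \<bar>mass p (S1 \<times> S2) - mass (marg1 k p) S1 * mass (marg2 k p) S2\<bar>
            \<ge> c * dTV k p (prod_dist (marg1 k p) (marg2 k p)) / real k})
        / real (card (half_subsets k \<times> half_subsets k)) \<ge> \<rho>)"
proof (intro exI conjI allI impI)
  fix k :: nat and p
  assume k: "even k \<and> k \<ge> 2 \<and> is_dist k p"
  then have "card {1..k} = 2 * (k div 2)" and "k div 2 \<ge> 1" by auto
  note bound = card_half_subset_pairs_large_bilinear_sum[OF finite_atLeastAtMost this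
      sum_product_deviation_row sum_product_deviation_col]
  have "subsets_of_size {1..k} (k div 2) = half_subsets k"
    by (simp add: half_subsets_def subsets_of_size_def)
  moreover have "1 / 10944 * dTV k p (prod_dist (marg1 k p) (marg2 k p)) / real k
      = (\<Sum>x\<in>{1..k}. \<Sum>y\<in>{1..k}. \<bar>product_deviation k p x y\<bar>) / (21888 * card {1..k})"
    by (simp add: dTV_prod_marginals)
  ultimately show "1 / (7296^2 * 1216) \<le> real (card {(S1, S2) \<in> half_subsets k \<times> half_subsets k.
          \<bar>mass p (S1 \<times> S2) - mass (marg1 k p) S1 * mass (marg2 k p) S2\<bar>
            \<ge> 1 / 10944 * dTV k p (prod_dist (marg1 k p) (marg2 k p)) / real k})
        / real (card (half_subsets k \<times> half_subsets k))"
    using bound k by (simp only: mass_rectangle_minus_product)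
qed simp_all

end
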